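(* In the setting described in the context, for all $0\le i,j\le\textsc{m}$, $$\sum_{k=0}^{\textsc{m}}f_k(\textsc{e}_i)f_k(\textsc{e}_j)\Delta_k=\begin{cases}N_j&i=j,\\0&i\ne j,\end{cases}$$ where $\Delta_k=\prod_{1\le l\le k}\frac{\tilde a_{\textsc{m}+1-l}}{a_l}$ and $$N_j=\frac{1}{|\epsilon_j|\,a_1\cdots a_{\textsc{m}}}\prod_{\substack{0\le l\le\textsc{m}\\ l\ne j}}|\textsc{e}_j-\textsc{e}_l|=\frac{1}{|\epsilon_j|}\prod_{\substack{1\le k\le\textsc{m}\\1\le r\le4}}\frac{[u_1+k]_r\,[u_1-\frac12+k]_r}{[u_1-u_r+k]_r\,[u_1-v_r-\frac12+k]_r}\prod_{\substack{0\le l\le\textsc{m}\\ l\ne j}}|\textsc{e}_j-\textsc{e}_l|,$$ with $\epsilon_j=\tilde p_{\textsc{m}}(\textsc{e}_j)/(a_1\cdots a_{\textsc{m}})$.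
   Context: Fix $0<p<1$ and the Jacobi theta functions $\theta_1(z)=2p^{1/4}\sin z\prod_{n\ge1}(1-p^{2n})(1-2p^{2n}\cos 2z+p^{4n})$, $\theta_2(z)=2p^{1/4}\cos z\prod_{n\ge1}(1-p^{2n})(1+2p^{2n}\cos 2z+p^{4n})$, $\theta_3(z)=\prod_{n\ge1}(1-p^{2n})(1+2p^{2n-1}\cos 2z+p^{4n-2})$, $\theta_4(z)=\prod_{n\ge1}(1-p^{2n})(1-2p^{2n-1}\cos 2z+p^{4n-2})$. For $\alpha>0$ set $[z]_1=\theta_1(\frac{\alpha}{2}z)/(\frac{\alpha}{2}\theta_1'(0))$, $[z]_r=\theta_r(\frac{\alpha}{2}z)/\theta_r(0)$ ($r=2,3,4$). Parameters: real $u_1,\dots,u_4,v_1,\dots,v_4$ with $u_r>0$, $|v_r|<u_r+\frac12$ for $r=1,2$; $\textsc{m}\in\mathbb{N}$; $\alpha=\pi/(u_1+u_2+\textsc{m})$; a real $u$ with $u,u+1\notin\frac{2\pi}{\alpha}\mathbb{Z}$. Let $\pi_1=\mathrm{id}$, $\pi_2=(12)(34)$, $\pi_3=(13)(24)$, $\pi_4=(14)(23)$ in $S_4$, and $c_r=\frac{2}{[u]_1[u+1]_1}\prod_{s=1}^4[u_{\pi_r(s)}-\frac12]_s[v_{\pi_r(s)}]_s$. For integers $k$ define $a_k=\prod_{r=1}^4\frac{[u_1-u_r+k]_r[u_1-v_r-\frac12+k]_r}{[u_1+k]_r[u_1-\frac12+k]_r}$, $\tilde a_k=\prod_{r=1}^4\frac{[u_2-u_{\pi_2(r)}+k]_r[u_2-v_{\pi_2(r)}-\frac12+k]_r}{[u_2+k]_r[u_2-\frac12+k]_r}$,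 $b_k=\sum_{r=1}^4c_r\frac{[u_1+k+\frac12+u]_r[u_1+k-\frac12-u]_r}{[u_1+k+\frac12]_r[u_1+k-\frac12]_r}$ (the numbers $a_k,\tilde a_k$, $1\le k\le\textsc{m}$, are positive). Let $\mathbf H$ be the $(\textsc{m}+1)\times(\textsc{m}+1)$ tridiagonal matrix with rows/columns indexed by $0,\dots,\textsc{m}$, $H_{k,k}=b_k$, $H_{k,k-1}=a_k$ ($1\le k\le\textsc{m}$), $H_{k,k+1}=\tilde a_{\textsc{m}-k}$ ($0\le k\le\textsc{m}-1$), all other entries $0$; its eigenvalues are real and simple, denoted $\textsc{e}_0>\textsc{e}_1>\cdots>\textsc{e}_{\textsc{m}}$. The monic elliptic Racah polynomials are $p_0(\textsc{e})=1$ and, for $1\le k\le\textsc{m}+1$, $p_k(\textsc{e})$ = the determinant of the upper-left $k\times k$ submatrix of $\textsc{e}\mathbf I_{\textsc{m}+1}-\mathbf H$; $f_k(\textsc{e})=p_k(\textsc{e})\prod_{0\le j<k}\tilde a_{\textsc{m}-j}^{-1}$. $\tilde p_{\textsc{m}}$ denotes $p_{\textsc{m}}$ computed with parameters permuted by $\pi_2$, i.e. $(u_1,v_1)\leftrightarrow(u_2,v_2)$ and $(u_3,v_3)\leftrightarrow(u_4,v_4)$. *)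

theory Defs
  imports "HOL-Analysis.Analysis" "Jordan_Normal_Form.Char_Poly" "Jordan_Normal_Form.Determinant"
begin

definition theta :: "real \<Rightarrow> nat \<Rightarrow> real \<Rightarrow> real" where
  "theta p r z =
    (if r = 1 then 2 * p powr (1/4) * sin z *
        prodinf (\<lambda>n. (1 - p^(2*Suc n)) * (1 - 2 * p^(2*Suc n) * cos (2*z) + p^(4*Suc n)))
     else if r = 2 then 2 * p powr (1/4) * cos z *
        prodinf (\<lambda>n. (1 - p^(2*Suc n)) * (1 + 2 * p^(2*Suc n) * cos (2*z) + p^(4*Suc n)))
     else if r = 3 then
        prodinf (\<lambda>n. (1 - p^(2*Suc n)) * (1 + 2 * p^(2*n+1) * cos (2*z) + p^(4*n+2)))
     else
        prodinf (\<lambda>n. (1 - p^(2*Suc n)) * (1 - 2 * p^(2*n+1) * cos (2*z) + p^(4*n+2))))"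

definition br :: "real \<Rightarrow> real \<Rightarrow> nat \<Rightarrow> real \<Rightarrow> real" where
  "br p \<alpha> r z =
    (if r = 1 then theta p 1 (\<alpha>/2 * z) / (\<alpha>/2 * deriv (theta p 1) 0)
     else theta p r (\<alpha>/2 * z) / theta p r 0)"

definition perm4 :: "nat \<Rightarrow> nat \<Rightarrow> nat" where
  "perm4 r s =
    (if r = 2 then (if s = 1 then 2 else if s = 2 then 1 else if s = 3 then 4 else if s = 4 then 3 else s)
     else if r = 3 then (if s = 1 then 3 else if s = 3 then 1 else if s = 2 then 4 else if s = 4 then 2 else s)
     else if r = 4 then (if s = 1 then 4 else if s = 4 then 1 else if s = 2 then 3 else if s = 3 then 2 else s)
     else s)"

text \<open>alpha = pi/(u1+u2+M).  Parameters uu, vv are indexed by 1..4.\<close>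
definition alph :: "(nat \<Rightarrow> real) \<Rightarrow> nat \<Rightarrow> real" where
  "alph uu M = pi / (uu 1 + uu 2 + real M)"

definition cc :: "real \<Rightarrow> (nat \<Rightarrow> real) \<Rightarrow> (nat \<Rightarrow> real) \<Rightarrow> nat \<Rightarrow> real \<Rightarrow> nat \<Rightarrow> real" where
  "cc p uu vv M u r =
    (let \<alpha> = alph uu M in
     2 / (br p \<alpha> 1 u * br p \<alpha> 1 (u+1)) *
     (\<Prod>s\<in>{1..4}. br p \<alpha> s (uu (perm4 r s) - 1/2) * br p \<alpha> s (vv (perm4 r s))))"

definition aa :: "real \<Rightarrow> (nat \<Rightarrow> real) \<Rightarrow> (nat \<Rightarrow> real) \<Rightarrow> nat \<Rightarrow> int \<Rightarrow> real" where
  "aa p uu vv M k =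
    (let \<alpha> = alph uu M in
     \<Prod>r\<in>{1..4}. br p \<alpha> r (uu 1 - uu r + k) * br p \<alpha> r (uu 1 - vv r - 1/2 + k)
               / (br p \<alpha> r (uu 1 + k) * br p \<alpha> r (uu 1 - 1/2 + k)))"

definition aat :: "real \<Rightarrow> (nat \<Rightarrow> real) \<Rightarrow> (nat \<Rightarrow> real) \<Rightarrow> nat \<Rightarrow> int \<Rightarrow> real" where
  "aat p uu vv M k =
    (let \<alpha> = alph uu M in
     \<Prod>r\<in>{1..4}. br p \<alpha> r (uu 2 - uu (perm4 2 r) + k) * br p \<alpha> r (uu 2 - vv (perm4 2 r) - 1/2 + k)
               / (br p \<alpha> r (uu 2 + k) * br p \<alpha> r (uu 2 - 1/2 + k)))"

definition bb :: "real \<Rightarrow> (nat \<Rightarrow> real) \<Rightarrow> (nat \<Rightarrow> real) \<Rightarrow> nat \<Rightarrow> real \<Rightarrow> int \<Rightarrow> real" where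
  "bb p uu vv M u k =
    (let \<alpha> = alph uu M in
     \<Sum>r\<in>{1..4}. cc p uu vv M u r *
        (br p \<alpha> r (uu 1 + k + 1/2 + u) * br p \<alpha> r (uu 1 + k - 1/2 - u))
        / (br p \<alpha> r (uu 1 + k + 1/2) * br p \<alpha> r (uu 1 + k - 1/2)))"

definition Hent :: "real \<Rightarrow> (nat \<Rightarrow> real) \<Rightarrow> (nat \<Rightarrow> real) \<Rightarrow> nat \<Rightarrow> real \<Rightarrow> nat \<Rightarrow> nat \<Rightarrow> real" where
  "Hent p uu vv M u i j =
    (if i = j then bb p uu vv M u (int i)
     else if i = j + 1 then aa p uu vv M (int i)
     else if j = i + 1 then aat p uu vv M (int M - int i)
     else 0)"

definition Hmat :: "real \<Rightarrow> (nat \<Rightarrow> real) \<Rightarrow> (nat \<Rightarrow> real) \<Rightarrow> nat \<Rightarrow> real \<Rightarrow> real mat" where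
  "Hmat p uu vv M u = mat (M+1) (M+1) (\<lambda>(i,j). Hent p uu vv M u i j)"

text \<open>Monic elliptic Racah polynomials: p_k(E) = det of the upper-left k x k block of E I - H
  (used for k \<le> M+1; p_0 = 1 as the determinant of the empty matrix).\<close>
definition pp :: "real \<Rightarrow> (nat \<Rightarrow> real) \<Rightarrow> (nat \<Rightarrow> real) \<Rightarrow> nat \<Rightarrow> real \<Rightarrow> nat \<Rightarrow> real \<Rightarrow> real" where
  "pp p uu vv M u k E =
    det (mat k k (\<lambda>(i,j). (if i = j then E else 0) - Hent p uu vv M u i j))"

definition ff :: "real \<Rightarrow> (nat \<Rightarrow> real) \<Rightarrow> (nat \<Rightarrow> real) \<Rightarrow> nat \<Rightarrow> real \<Rightarrow> nat \<Rightarrow> real \<Rightarrow> real" where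
  "ff p uu vv M u k E =
    pp p uu vv M u k E * (\<Prod>j<k. inverse (aat p uu vv M (int M - int j)))"

definition Delta :: "real \<Rightarrow> (nat \<Rightarrow> real) \<Rightarrow> (nat \<Rightarrow> real) \<Rightarrow> nat \<Rightarrow> nat \<Rightarrow> real" where
  "Delta p uu vv M k =
    (\<Prod>l\<in>{1..k}. aat p uu vv M (int M + 1 - int l) / aa p uu vv M (int l))"

end

theory Submission
  imports Defs
begin

(* Write at_k (aat) for the paper's a_k with a tilde.  Since H is tridiagonal,
   expanding det (E I - H) along the last row shows that the p_k are continuants:
   p_(k+1) = (E - b_k) p_k - a_k at_(M+1-k) p_(k-1).  The eigenvalues E_0 > ... > E_M are the zeros
   of p_(M+1), and the Christoffel-Darboux identity for this recurrence gives orthogonality for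
   i \<noteq> j.  For i = j the confluent Christoffel-Darboux sum at a zero of p_(M+1) equals
   p_M(E_j) \<Prod>_(l \<noteq> j) (E_j - E_l) / \<Prod>_l a_l at_(M+1-l), and the Casoratian of the recurrence and of
   its shift by one index turns p_M(E_j) into the reciprocal of the shifted continuant.  The
   symmetry \<pi>_2 reverses H, which identifies that shifted continuant with the p_M of the permuted
   parameters.  Positivity of the theta functions on the relevant ranges makes all a_k, at_k
   positive, so the norm is positive and equals its absolute value. *)

section \<open>Continuants\<close>

(* g i couples d (i - 1) and d i, so g 0 is never used. *)
fun continuant :: "(nat \<Rightarrow> 'a::comm_ring_1) \<Rightarrow> (nat \<Rightarrow> 'a) \<Rightarrow> nat \<Rightarrow> 'a" where
  "continuant d g 0 = 1"
| "continuant d g (Suc 0) = d 0"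
| "continuant d g (Suc (Suc n)) = d (Suc n) * continuant d g (Suc n) - g (Suc n) * continuant d g n"

lemma continuant_cong:
  assumes "\<And>i. i < n \<Longrightarrow> d i = d' i" and "\<And>i. 0 < i \<Longrightarrow> i < n \<Longrightarrow> g i = g' i"
  shows "continuant d g n = continuant d' g' n"
  using assms
proof (induction d g n rule: continuant.induct)
  case (3 d g n)
  have "continuant d g (Suc n) = continuant d' g' (Suc n)" "continuant d g n = continuant d' g' n"
    using 3 by (metis less_SucI)+
  then show ?case using 3(3,4) by simp
qed auto

lemma det_tridiagonal_Suc_Suc:
  fixes T :: "nat \<Rightarrow> nat \<Rightarrow> 'a::comm_ring_1"
  assumes below: "\<And>i j. j + 1 < i \<Longrightarrow> T i j = 0" and above: "\<And>i j. i + 1 < j \<Longrightarrow> T i j = 0"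
  shows "det (mat (Suc (Suc n)) (Suc (Suc n)) (\<lambda>(i,j). T i j))
    = T (Suc n) (Suc n) * det (mat (Suc n) (Suc n) (\<lambda>(i,j). T i j))
      - T (Suc n) n * T n (Suc n) * det (mat n n (\<lambda>(i,j). T i j))"
proof -
  let ?A = "mat (Suc (Suc n)) (Suc (Suc n)) (\<lambda>(i,j). T i j)"
  let ?B = "mat (Suc n) (Suc n) (\<lambda>(i,j). T i (if j < n then j else Suc j))"
  have delete_last: "mat_delete ?A (Suc n) (Suc n) = mat (Suc n) (Suc n) (\<lambda>(i,j). T i j)"
    by (rule eq_matI) (auto simp: mat_delete_def)
  have delete_diag: "mat_delete ?A (Suc n) n = ?B"
    by (rule eq_matI) (auto simp: mat_delete_def)
  have "det ?A = (\<Sum>j<Suc (Suc n). ?A $$ (Suc n, j) * cofactor ?A (Suc n) j)"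
    by (rule laplace_expansion_row) simp_all
  also have "\<dots> = ?A $$ (Suc n, n) * cofactor ?A (Suc n) n
      + ?A $$ (Suc n, Suc n) * cofactor ?A (Suc n) (Suc n)"
    by (simp add: below)
  finally have expand_row: "det ?A = T (Suc n) (Suc n) * det (mat (Suc n) (Suc n) (\<lambda>(i,j). T i j))
      - T (Suc n) n * det ?B"
    by (simp add: cofactor_def delete_last delete_diag)
  have delete_corner: "mat_delete ?B n n = mat n n (\<lambda>(i,j). T i j)"
    by (rule eq_matI) (auto simp: mat_delete_def)
  have "det ?B = (\<Sum>i<Suc n. ?B $$ (i, n) * cofactor ?B i n)"
    by (rule laplace_expansion_column) simp_all
  also have "\<dots> = ?B $$ (n, n) * cofactor ?B n n"
    by (simp add: above)
  finally have "det ?B = T n (Suc n) * det (mat n n (\<lambda>(i,j). T i j))"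
    by (simp add: cofactor_def delete_corner)
  with expand_row show ?thesis by (simp add: algebra_simps)
qed

lemma det_tridiagonal:
  fixes T :: "nat \<Rightarrow> nat \<Rightarrow> 'a::comm_ring_1"
  assumes "\<And>i j. j + 1 < i \<Longrightarrow> T i j = 0" and "\<And>i j. i + 1 < j \<Longrightarrow> T i j = 0"
  shows "det (mat n n (\<lambda>(i,j). T i j)) = continuant (\<lambda>i. T i i) (\<lambda>i. T i (i - 1) * T (i - 1) i) n"
proof (induction n rule: induct_nat_012)
  case (ge2 n)
  then show ?case by (simp add: det_tridiagonal_Suc_Suc[OF assms] mult.assoc)
qed (simp_all add: det_def)

lemma continuant_expand_first:
  "continuant d g (Suc (Suc n)) = d 0 * continuant (\<lambda>i. d (Suc i)) (\<lambda>i. g (Suc i)) (Suc n)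
     - g 1 * continuant (\<lambda>i. d (i + 2)) (\<lambda>i. g (i + 2)) n"
proof (induction n rule: induct_nat_012)
  case (ge2 n)
  show ?case
    by (simp only: continuant.simps(3)[of d g "Suc (Suc n)"] ge2
        continuant.simps(3)[of "\<lambda>i. d (Suc i)" _ "Suc n"] continuant.simps(3)[of "\<lambda>i. d (i + 2)" _ n])
      (simp add: algebra_simps)
qed (simp_all add: algebra_simps)

lemma continuant_reverse:
  "continuant (\<lambda>i. d (n - 1 - i)) (\<lambda>i. g (n - i)) n = continuant d g n"
proof (induction n arbitrary: d g rule: induct_nat_012)
  case (ge2 n)
  have "continuant (\<lambda>i. d (Suc (Suc n) - 1 - i)) (\<lambda>i. g (Suc (Suc n) - i)) (Suc n)
      = continuant (\<lambda>i. d (Suc (n - i))) (\<lambda>i. g (Suc (Suc n - i))) (Suc n)"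
    by (rule continuant_cong) (simp_all add: Suc_diff_le)
  also have "\<dots> = continuant (\<lambda>i. d (Suc i)) (\<lambda>i. g (Suc i)) (Suc n)"
    using ge2(2)[of "\<lambda>i. d (Suc i)" "\<lambda>i. g (Suc i)"] by simp
  finally have first: "continuant (\<lambda>i. d (Suc (Suc n) - 1 - i)) (\<lambda>i. g (Suc (Suc n) - i)) (Suc n)
      = continuant (\<lambda>i. d (Suc i)) (\<lambda>i. g (Suc i)) (Suc n)" .
  have "continuant (\<lambda>i. d (Suc (Suc n) - 1 - i)) (\<lambda>i. g (Suc (Suc n) - i)) n
      = continuant (\<lambda>i. d (n - 1 - i + 2)) (\<lambda>i. g (n - i + 2)) n"
    by (rule continuant_cong) (simp_all add: Suc_diff_le Suc_diff_Suc)
  also have "\<dots> = continuant (\<lambda>i. d (i + 2)) (\<lambda>i. g (i + 2)) n"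
    using ge2(1)[of "\<lambda>i. d (i + 2)" "\<lambda>i. g (i + 2)"] by simp
  finally have second: "continuant (\<lambda>i. d (Suc (Suc n) - 1 - i)) (\<lambda>i. g (Suc (Suc n) - i)) n
      = continuant (\<lambda>i. d (i + 2)) (\<lambda>i. g (i + 2)) n" .
  show ?case
    unfolding continuant_expand_first[of d g n] by (simp only: continuant.simps(3) first second) simp
qed simp_all

lemma continuant_casoratian:
  assumes "n \<ge> 1"
  shows "continuant d g n * continuant (\<lambda>i. d (Suc i)) (\<lambda>i. g (Suc i)) n
     - continuant d g (Suc n) * continuant (\<lambda>i. d (Suc i)) (\<lambda>i. g (Suc i)) (n - 1) = (\<Prod>l\<in>{1..n}. g l)"
  using assms
proof (induction n rule: dec_induct)
  case base then show ?case by (simp add: algebra_simps)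
next
  case (step n)
  then obtain m where m: "n = Suc m" by (cases n) auto
  let ?K' = "continuant (\<lambda>i. d (Suc i)) (\<lambda>i. g (Suc i))"
  have shifted: "?K' (Suc n) = d (Suc n) * ?K' n - g (Suc n) * ?K' (n - 1)"
    by (simp only: m continuant.simps(3) diff_Suc_1)
  have "continuant d g (Suc n) * ?K' (Suc n) - continuant d g (Suc (Suc n)) * ?K' n
     = g (Suc n) * (continuant d g n * ?K' n - continuant d g (Suc n) * ?K' (n - 1))"
    by (simp only: shifted continuant.simps(3)[of d g n]) (simp add: algebra_simps)
  also have "\<dots> = g (Suc n) * (\<Prod>l\<in>{1..n}. g l)"
    by (simp only: step.IH)
  also have "\<dots> = (\<Prod>l\<in>{1..Suc n}. g l)"
    by (simp add: prod.atLeast1_atMost_eq mult.commute)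
  finally show ?case by simp
qed

lemma continuant_christoffel_darboux:
  fixes b g :: "nat \<Rightarrow> 'a::field"
  assumes "\<And>l. 1 \<le> l \<Longrightarrow> l \<le> n \<Longrightarrow> g l \<noteq> 0"
  shows "(x - y) * (\<Sum>k\<le>n. continuant (\<lambda>i. x - b i) g k * continuant (\<lambda>i. y - b i) g k / (\<Prod>l\<in>{1..k}. g l))
     = (continuant (\<lambda>i. y - b i) g n * continuant (\<lambda>i. x - b i) g (Suc n)
        - continuant (\<lambda>i. x - b i) g n * continuant (\<lambda>i. y - b i) g (Suc n)) / (\<Prod>l\<in>{1..n}. g l)"
  using assms
proof (induction n)
  case (Suc n)
  let ?X = "continuant (\<lambda>i. x - b i) g" and ?Y = "continuant (\<lambda>i. y - b i) g"
  have "g (Suc n) \<noteq> 0" "(\<Prod>l\<in>{1..n}. g l) \<noteq> 0"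
    using Suc.prems by auto
  have split_prod: "(\<Prod>l\<in>{1..Suc n}. g l) = g (Suc n) * (\<Prod>l\<in>{1..n}. g l)"
    by (simp add: prod.atLeast1_atMost_eq mult.commute)
  have "(x - y) * (\<Sum>k\<le>Suc n. ?X k * ?Y k / (\<Prod>l\<in>{1..k}. g l)) =
     (?Y n * ?X (Suc n) - ?X n * ?Y (Suc n)) / (\<Prod>l\<in>{1..n}. g l)
     + (x - y) * (?X (Suc n) * ?Y (Suc n)) / (g (Suc n) * (\<Prod>l\<in>{1..n}. g l))"
    using Suc split_prod by (simp add: algebra_simps)
  also have "\<dots> = (?Y (Suc n) * ?X (Suc (Suc n)) - ?X (Suc n) * ?Y (Suc (Suc n)))
      / (g (Suc n) * (\<Prod>l\<in>{1..n}. g l))"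
    using \<open>g (Suc n) \<noteq> 0\<close> \<open>(\<Prod>l\<in>{1..n}. g l) \<noteq> 0\<close> by (simp add: field_simps)
  finally show ?case using split_prod by simp
qed (simp add: algebra_simps)

lemma poly_continuant_linear:
  "poly (continuant (\<lambda>i. [:- b i, 1:]) (\<lambda>i. [:g i:]) n) x = continuant (\<lambda>i. x - b i) g n"
  by (induction n rule: induct_nat_012) (simp_all add: algebra_simps)

lemma continuant_monic_degree:
  fixes b g :: "nat \<Rightarrow> 'a::comm_ring_1"
  shows "degree (continuant (\<lambda>i. [:- b i, 1:]) (\<lambda>i. [:g i:]) n) \<le> n
    \<and> Polynomial.coeff (continuant (\<lambda>i. [:- b i, 1:]) (\<lambda>i. [:g i:]) n) n = 1"
proof (induction n rule: induct_nat_012)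
  case (ge2 n)
  let ?p = "continuant (\<lambda>i. [:- b i, 1:]) (\<lambda>i. [:g i:]) (Suc n)"
  let ?q = "continuant (\<lambda>i. [:- b i, 1:]) (\<lambda>i. [:g i:]) n"
  have "degree ([:- b (Suc n), 1:] * ?p) \<le> Suc (Suc n)"
    using ge2 degree_mult_le[of "[:- b (Suc n), 1:]" ?p] by simp
  moreover have "degree ([:g (Suc n):] * ?q) \<le> Suc (Suc n)"
    using ge2 degree_mult_le[of "[:g (Suc n):]" ?q] by simp
  moreover have "Polynomial.coeff ([:- b (Suc n), 1:] * ?p) (Suc (Suc n)) = 1"
    using ge2 by (simp add: coeff_eq_0)
  moreover have "Polynomial.coeff ([:g (Suc n):] * ?q) (Suc (Suc n)) = 0"
    using ge2 by (simp add: coeff_eq_0)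
  ultimately show ?case by (simp add: degree_diff_le)
qed simp_all

lemma continuant_eq_prod_roots:
  fixes E b g :: "nat \<Rightarrow> 'a::idom"
  assumes "inj_on E {0..M}" and roots: "\<And>l. l \<le> M \<Longrightarrow> continuant (\<lambda>i. E l - b i) g (Suc M) = 0"
  shows "continuant (\<lambda>i. x - b i) g (Suc M) = (\<Prod>l\<in>{0..M}. x - E l)"
proof -
  let ?K = "continuant (\<lambda>i. [:- b i, 1:]) (\<lambda>i. [:g i:]) (Suc M)"
  let ?q = "\<Prod>l\<in>{0..M}. [:- E l, 1:]"
  have poly_q: "poly ?q z = (\<Prod>l\<in>{0..M}. z - E l)" for z
    by (simp add: poly_prod)
  have "?K = ?q"
  proof (rule poly_eqI_degree_lead_coeff[where n = "Suc M" and A = "E ` {0..M}"])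
    have degree_q: "degree ?q = Suc M"
      by (subst degree_prod_sum_eq) auto
    moreover have "lead_coeff ?q = 1"
      by (simp add: lead_coeff_prod)
    ultimately show "Polynomial.coeff ?K (Suc M) = Polynomial.coeff ?q (Suc M)" "degree ?q \<le> Suc M"
      using continuant_monic_degree[of b g "Suc M"] by simp_all
    show "Suc M \<le> card (E ` {0..M})" "degree ?K \<le> Suc M"
      using card_image[OF assms(1)] continuant_monic_degree[of b g "Suc M"] by simp_all
    show "poly ?K z = poly ?q z" if z: "z \<in> E ` {0..M}" for z
    proof -
      obtain l where l: "l \<in> {0..M}" "z = E l" using z by blast
      then have "poly ?q z = 0"
        unfolding poly_q by (intro prod_zero bexI[of _ l]) simp_all
      moreover have "poly ?K z = 0"
        using roots l by (simp add: poly_continuant_linear)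
      ultimately show ?thesis by simp
    qed
  qed
  then show ?thesis
    by (metis poly_continuant_linear poly_q)
qed

lemma continuant_sum_squares_at_root:
  fixes E b g :: "nat \<Rightarrow> 'a::field_char_0"
  assumes "inj_on E {0..M}"
    and roots: "\<And>l. l \<le> M \<Longrightarrow> continuant (\<lambda>i. E l - b i) g (Suc M) = 0"
    and g: "\<And>l. 1 \<le> l \<Longrightarrow> l \<le> M \<Longrightarrow> g l \<noteq> 0"
    and "j \<le> M"
  shows "(\<Sum>k\<le>M. continuant (\<lambda>i. E j - b i) g k ^ 2 / (\<Prod>l\<in>{1..k}. g l))
     = continuant (\<lambda>i. E j - b i) g M / (\<Prod>l\<in>{1..M}. g l) * (\<Prod>l\<in>{0..M} - {j}. E j - E l)"
proof -
  let ?K = "\<lambda>x. continuant (\<lambda>i. x - b i) g"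
  define c where "c = ?K (E j) M / (\<Prod>l\<in>{1..M}. g l)"
  define S where "S = (\<Sum>k\<le>M. Polynomial.smult (?K (E j) k / (\<Prod>l\<in>{1..k}. g l))
                                 (continuant (\<lambda>i. [:- b i, 1:]) (\<lambda>i. [:g i:]) k))"
  define R where "R = Polynomial.smult c (\<Prod>l\<in>{0..M} - {j}. [:- E l, 1:])"
  have poly_S: "poly S x = (\<Sum>k\<le>M. ?K x k * ?K (E j) k / (\<Prod>l\<in>{1..k}. g l))" for x
    unfolding S_def by (simp add: poly_sum poly_continuant_linear algebra_simps)
  have poly_R: "poly R x = c * (\<Prod>l\<in>{0..M} - {j}. x - E l)" for x
    unfolding R_def by (simp add: poly_prod)
  (* Christoffel-Darboux at y = E j, read as a polynomial identity in x, can be divided by x - E j;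
     evaluating the quotient at x = E j gives the confluent case. *)
  have "poly ([:- E j, 1:] * S) x = poly ([:- E j, 1:] * R) x" for x
  proof -
    have "poly ([:- E j, 1:] * S) x = (x - E j) * poly S x" by (simp add: algebra_simps)
    also have "\<dots> = (?K (E j) M * ?K x (Suc M) - ?K x M * ?K (E j) (Suc M)) / (\<Prod>l\<in>{1..M}. g l)"
      unfolding poly_S by (rule continuant_christoffel_darboux[OF g])
    also have "\<dots> = c * (\<Prod>l\<in>{0..M}. x - E l)"
      unfolding c_def using roots[OF \<open>j \<le> M\<close>] continuant_eq_prod_roots[OF assms(1) roots, of x] by simp
    also have "(\<Prod>l\<in>{0..M}. x - E l) = (x - E j) * (\<Prod>l\<in>{0..M} - {j}. x - E l)"
      using \<open>j \<le> M\<close> by (subst prod.remove[of _ j]) auto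
    finally show ?thesis using poly_R by (simp add: algebra_simps)
  qed
  then have "[:- E j, 1:] * S = [:- E j, 1:] * R"
    by (rule poly_ext)
  moreover have "[:- E j, 1:] \<noteq> 0"
    by simp
  ultimately have "S = R"
    using mult_left_cancel by blast
  then have "poly S (E j) = poly R (E j)" by simp
  then show ?thesis unfolding poly_S poly_R c_def by (simp add: power2_eq_square)
qed

lemma continuant_orthogonality:
  fixes E b g :: "nat \<Rightarrow> real"
  assumes dec: "\<And>i j. i < j \<Longrightarrow> j \<le> M \<Longrightarrow> E j < E i"
    and roots: "\<And>l. l \<le> M \<Longrightarrow> continuant (\<lambda>i. E l - b i) g (Suc M) = 0"
    and g: "\<And>l. 1 \<le> l \<Longrightarrow> l \<le> M \<Longrightarrow> g l > 0"
    and "i \<le> M" "j \<le> M"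
  shows "(\<Sum>k\<le>M. continuant (\<lambda>l. E i - b l) g k * continuant (\<lambda>l. E j - b l) g k / (\<Prod>l\<in>{1..k}. g l))
    = (if i = j
       then \<bar>\<Prod>l\<in>{0..M} - {j}. E j - E l\<bar>
            / \<bar>continuant (\<lambda>l. E j - b (Suc l)) (\<lambda>l. g (Suc l)) M\<bar>
       else 0)"
proof -
  let ?K = "\<lambda>x. continuant (\<lambda>i. x - b i) g"
  let ?K' = "continuant (\<lambda>l. E j - b (Suc l)) (\<lambda>l. g (Suc l)) M"
  let ?P = "\<Prod>l\<in>{0..M} - {j}. E j - E l"
  have inj: "inj_on E {0..M}"
    by (rule inj_onI) (metis atLeastAtMost_iff dec less_irrefl linorder_neq_iff)
  have g_nonzero: "g l \<noteq> 0" if "1 \<le> l" "l \<le> M" for l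
    using g[OF that] by simp
  have g_prod_pos: "(\<Prod>l\<in>{1..k}. g l) > 0" if "k \<le> M" for k
    using that g by (intro prod_pos) auto
  have casoratian: "?K (E j) M * ?K' = (\<Prod>l\<in>{1..M}. g l)"
  proof (cases M)
    case (Suc m)
    with continuant_casoratian[of M "\<lambda>i. E j - b i" g] roots[OF \<open>j \<le> M\<close>]
    show ?thesis by simp
  qed simp
  show ?thesis
  proof (cases "i = j")
    case True
    have "(\<Sum>k\<le>M. ?K (E j) k ^ 2 / (\<Prod>l\<in>{1..k}. g l)) = ?K (E j) M / (\<Prod>l\<in>{1..M}. g l) * ?P"
      by (rule continuant_sum_squares_at_root[OF inj roots g_nonzero \<open>j \<le> M\<close>])
    also have "\<dots> = ?P / ?K'"
    proof -
      have "(\<Prod>l\<in>{1..M}. g l) \<noteq> 0"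
        using g_prod_pos[of M] by linarith
      moreover from this have "?K' \<noteq> 0"
        using casoratian by (metis mult_zero_right)
      ultimately show ?thesis using casoratian
        by (simp add: field_simps)
    qed
    finally have norm: "(\<Sum>k\<le>M. ?K (E j) k ^ 2 / (\<Prod>l\<in>{1..k}. g l)) = ?P / ?K'" .
    moreover have "(\<Sum>k\<le>M. ?K (E j) k ^ 2 / (\<Prod>l\<in>{1..k}. g l)) \<ge> ?K (E j) 0 ^ 2 / (\<Prod>l\<in>{1..0}. g l)"
    proof (rule member_le_sum)
      show "0 \<le> ?K (E j) k ^ 2 / (\<Prod>l\<in>{1..k}. g l)" if "k \<in> {..M} - {0}" for k
        using that g_prod_pos[of k] by (intro divide_nonneg_pos) simp_all
    qed simp_all
    ultimately have "?P / ?K' > 0" by simp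
    then have "?P / ?K' = \<bar>?P\<bar> / \<bar>?K'\<bar>"
      by (metis abs_divide abs_of_pos)
    with norm True show ?thesis
      by (simp add: power2_eq_square)
  next
    case False
    then have "E i \<noteq> E j"
      using inj \<open>i \<le> M\<close> \<open>j \<le> M\<close> by (auto dest: inj_onD)
    moreover have "(E i - E j) * (\<Sum>k\<le>M. ?K (E i) k * ?K (E j) k / (\<Prod>l\<in>{1..k}. g l)) = 0"
      using continuant_christoffel_darboux[OF g_nonzero, where x = "E i" and y = "E j" and b = b]
        roots[OF \<open>i \<le> M\<close>] roots[OF \<open>j \<le> M\<close>]
      by simp
    ultimately show ?thesis using False by simp
  qed
qed

section \<open>Theta functions\<close>

definition theta_factor :: "real \<Rightarrow> (nat \<Rightarrow> real) \<Rightarrow> real \<Rightarrow> nat \<Rightarrow> real" where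
  "theta_factor p q c n = (1 - p^(2*Suc n)) * (1 + 2 * q n * c + (q n)^2)"

lemma theta_factor_bounds:
  assumes p: "0 < p" "p < 1" and q: "\<And>n. 0 \<le> q n \<and> q n \<le> p^(Suc n)" and c: "\<bar>c\<bar> \<le> 1"
  shows "theta_factor p q c n > 0" "\<bar>theta_factor p q c n - 1\<bar> \<le> 7 * p^(Suc n)"
proof -
  have "p^(Suc n) < 1" using p by (rule power_Suc_less_one)
  have "0 \<le> p^(2*Suc n)" "p^(2*Suc n) \<le> p^(Suc n)"
    using p power_decreasing[of "Suc n" "2*Suc n" p] by simp_all
  have "0 \<le> q n" "q n \<le> p^(Suc n)" using q by auto
  have qc: "\<bar>q n * c\<bar> \<le> q n" using \<open>0 \<le> q n\<close> c by (simp add: abs_mult mult_left_le)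
  have "(1 - q n)^2 > 0" using \<open>q n \<le> p^(Suc n)\<close> \<open>p^(Suc n) < 1\<close> by simp
  then have pos: "1 + 2 * q n * c + (q n)^2 > 0"
    using qc by (simp add: power2_eq_square algebra_simps abs_le_iff)
  moreover have "1 - p^(2*Suc n) > 0"
    using \<open>p^(2*Suc n) \<le> p^(Suc n)\<close> \<open>p^(Suc n) < 1\<close> by linarith
  ultimately show "theta_factor p q c n > 0" unfolding theta_factor_def by simp
  have qq: "(q n)^2 \<le> q n"
    using \<open>0 \<le> q n\<close> \<open>q n \<le> p^(Suc n)\<close> \<open>p^(Suc n) < 1\<close> by (simp add: power2_eq_square mult_le_one mult_left_le)
  have "1 + 2 * q n * c + (q n)^2 \<le> 4"
    using qc qq \<open>q n \<le> p^(Suc n)\<close> \<open>p^(Suc n) < 1\<close> by (simp add: abs_le_iff)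
  with pos \<open>0 \<le> p^(2*Suc n)\<close>
  have "\<bar>p^(2*Suc n) * (1 + 2 * q n * c + (q n)^2)\<bar> \<le> p^(2*Suc n) * 4"
    by (simp add: mult_left_mono)
  moreover have "theta_factor p q c n - 1 = 2 * q n * c + (q n)^2 - p^(2*Suc n) * (1 + 2 * q n * c + (q n)^2)"
    unfolding theta_factor_def by (simp add: algebra_simps)
  ultimately have "\<bar>theta_factor p q c n - 1\<bar> \<le> 2 * q n + q n + p^(2*Suc n) * 4"
    using qc qq \<open>0 \<le> q n\<close> zero_le_power2[of "q n"] by (simp only: abs_le_iff mult.assoc) linarith
  also have "\<dots> \<le> 7 * p^(Suc n)"
    using \<open>q n \<le> p^(Suc n)\<close> \<open>p^(2*Suc n) \<le> p^(Suc n)\<close> by simp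
  finally show "\<bar>theta_factor p q c n - 1\<bar> \<le> 7 * p^(Suc n)" .
qed

lemma summable_7_power_Suc: "0 < p \<Longrightarrow> p < (1::real) \<Longrightarrow> summable (\<lambda>n. 7 * p^(Suc n))"
  by (intro summable_mult summable_mult2) (simp add: summable_geometric)

lemma
  assumes p: "0 < p" "p < 1" and q: "\<And>n. 0 \<le> q n \<and> q n \<le> p^(Suc n)" and c: "\<bar>c\<bar> \<le> 1"
  shows convergent_prod_theta_factor: "convergent_prod (theta_factor p q c)"
    and prodinf_theta_factor_pos: "prodinf (theta_factor p q c) > 0"
proof -
  have "summable (\<lambda>n. \<bar>theta_factor p q c n - 1\<bar>)"
    by (rule summable_comparison_test'[OF summable_7_power_Suc[OF p]])
      (use theta_factor_bounds[OF p q c] in auto)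
  then have "convergent_prod (\<lambda>n. 1 + (theta_factor p q c n - 1))"
  proof (rule summable_imp_convergent_prod_real)
    show "theta_factor p q c n - 1 \<noteq> - 1" for n
      using theta_factor_bounds(1)[OF p q c, of n] by linarith
  qed
  then show cp: "convergent_prod (theta_factor p q c)" by simp
  show "prodinf (theta_factor p q c) > 0"
    by (rule less_0_prodinf[OF cp]) (use theta_factor_bounds[OF p q c] in auto)
qed

lemma isCont_prodinf_theta_factor:
  assumes p: "0 < p" "p < 1" and q: "\<And>n. 0 \<le> q n \<and> q n \<le> p^(Suc n)" and s: "\<bar>s\<bar> \<le> 1"
  shows "isCont (\<lambda>z. prodinf (theta_factor p q (s * cos (2*z)))) x"
proof -
  let ?A = "cball x 1"
  have c: "\<bar>s * cos (2*z)\<bar> \<le> 1" for z using s by (simp add: abs_mult mult_le_one)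
  have "uniformly_convergent_on ?A (\<lambda>N z. \<Prod>n<N. theta_factor p q (s * cos (2*z)) n)"
  proof (rule uniformly_convergent_on_prod')
    show "continuous_on ?A (\<lambda>z. theta_factor p q (s * cos (2*z)) n)" for n
      unfolding theta_factor_def by (intro continuous_intros)
    show "uniformly_convergent_on ?A (\<lambda>N z. \<Sum>n<N. norm (theta_factor p q (s * cos (2*z)) n - 1))"
      by (rule Weierstrass_m_test'[OF _ summable_7_power_Suc[OF p]]) (use theta_factor_bounds(2)[OF p q c] in auto)
    show "compact ?A" by simp
  qed
  then obtain l where ul: "uniform_limit ?A (\<lambda>N z. \<Prod>n<N. theta_factor p q (s * cos (2*z)) n) l sequentially"
    unfolding uniformly_convergent_on_def by blast
  have "\<forall>N. continuous_on ?A (\<lambda>z. \<Prod>n<N. theta_factor p q (s * cos (2*z)) n)"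
    unfolding theta_factor_def by (intro allI continuous_intros)
  then have continuous_l: "continuous_on ?A l"
    by (intro uniform_limit_theorem[OF _ ul] always_eventually) (simp_all add: trivial_limit_sequentially)
  have l_eq: "l z = prodinf (theta_factor p q (s * cos (2*z)))" if "z \<in> ?A" for z
  proof (rule LIMSEQ_unique)
    show "(\<lambda>N. \<Prod>n<N. theta_factor p q (s * cos (2*z)) n) \<longlonglongrightarrow> l z"
      using tendsto_uniform_limitI[OF ul that] .
    show "(\<lambda>N. \<Prod>n<N. theta_factor p q (s * cos (2*z)) n) \<longlonglongrightarrow> prodinf (theta_factor p q (s * cos (2*z)))"
      using convergent_prod_LIMSEQ[OF convergent_prod_theta_factor[OF p q c]]
      by (simp add: LIMSEQ_lessThan_iff_atMost)
  qed
  have "continuous_on ?A (\<lambda>z. prodinf (theta_factor p q (s * cos (2*z))))"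
    by (rule iffD1[OF continuous_on_cong[OF refl l_eq] continuous_l])
  then show ?thesis
    by (rule continuous_on_interior) (simp add: interior_cball)
qed

lemma theta_eq_prodinf:
  "theta p 1 z = 2 * p powr (1/4) * sin z * prodinf (theta_factor p (\<lambda>n. p^(2*Suc n)) (- 1 * cos (2*z)))"
  "theta p 2 z = 2 * p powr (1/4) * cos z * prodinf (theta_factor p (\<lambda>n. p^(2*Suc n)) (1 * cos (2*z)))"
  "theta p 3 z = prodinf (theta_factor p (\<lambda>n. p^(2*n+1)) (1 * cos (2*z)))"
  "theta p 4 z = prodinf (theta_factor p (\<lambda>n. p^(2*n+1)) (- 1 * cos (2*z)))"
proof -
  have "4 * Suc n = 2 * Suc n * 2" "4 * n + 2 = (2 * n + 1) * 2" for n :: nat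
    by simp_all
  then have sq: "p^(4*Suc n) = (p^(2*Suc n))^2" "p^(4*n+2) = (p^(2*n+1))^2" for n
    by (simp_all only: power_mult)
  show "theta p 1 z = 2 * p powr (1/4) * sin z * prodinf (theta_factor p (\<lambda>n. p^(2*Suc n)) (- 1 * cos (2*z)))"
    "theta p 2 z = 2 * p powr (1/4) * cos z * prodinf (theta_factor p (\<lambda>n. p^(2*Suc n)) (1 * cos (2*z)))"
    "theta p 3 z = prodinf (theta_factor p (\<lambda>n. p^(2*n+1)) (1 * cos (2*z)))"
    "theta p 4 z = prodinf (theta_factor p (\<lambda>n. p^(2*n+1)) (- 1 * cos (2*z)))"
    unfolding theta_def theta_factor_def sq
    by (simp_all only: mult_minus_left mult_minus_right mult_1_left diff_conv_add_uminus) simp_all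
qed

lemma theta_nome_powers_bounded:
  assumes "0 < p" "p < (1::real)"
  shows "0 \<le> p^(2*Suc n) \<and> p^(2*Suc n) \<le> p^(Suc n)" "0 \<le> p^(2*n+1) \<and> p^(2*n+1) \<le> p^(Suc n)"
  using assms power_decreasing[of "Suc n" "2*Suc n" p] power_decreasing[of "Suc n" "2*n+1" p] by simp_all

lemma theta_pos:
  assumes p: "0 < p" "p < 1"
  shows "theta p 3 z > 0" "theta p 4 z > 0"
    "sin z > 0 \<Longrightarrow> theta p 1 z > 0" "cos z > 0 \<Longrightarrow> theta p 2 z > 0"
  using prodinf_theta_factor_pos[OF p theta_nome_powers_bounded(1)[OF p], of "- 1 * cos (2*z)"]
    prodinf_theta_factor_pos[OF p theta_nome_powers_bounded(1)[OF p], of "1 * cos (2*z)"]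
    prodinf_theta_factor_pos[OF p theta_nome_powers_bounded(2)[OF p], of "- 1 * cos (2*z)"]
    prodinf_theta_factor_pos[OF p theta_nome_powers_bounded(2)[OF p], of "1 * cos (2*z)"]
  unfolding theta_eq_prodinf using p by auto

lemma theta_reflect:
  "theta p 1 (pi/2 - w) = theta p 2 w" "theta p 2 (pi/2 - w) = theta p 1 w"
  "theta p 3 (pi/2 - w) = theta p 4 w" "theta p 4 (pi/2 - w) = theta p 3 w"
proof -
  have "cos (2 * (pi/2 - v)) = - cos (2 * v)" for v
    by (simp add: right_diff_distrib cos_diff)
  then show "theta p 1 (pi/2 - w) = theta p 2 w" "theta p 2 (pi/2 - w) = theta p 1 w"
    "theta p 3 (pi/2 - w) = theta p 4 w" "theta p 4 (pi/2 - w) = theta p 3 w"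
    unfolding theta_eq_prodinf by (simp_all add: sin_diff cos_diff)
qed

lemma deriv_theta1_pos:
  assumes p: "0 < p" "p < 1"
  shows "deriv (theta p 1) 0 > 0"
proof -
  let ?G = "\<lambda>z. prodinf (theta_factor p (\<lambda>n. p^(2*Suc n)) (- 1 * cos (2*z)))"
  have "isCont ?G 0"
    by (rule isCont_prodinf_theta_factor[OF p theta_nome_powers_bounded(1)[OF p]]) simp
  have "((\<lambda>h. 2 * p powr (1/4) * (sin h / h) * ?G h) \<longlongrightarrow> 2 * p powr (1/4) * 1 * ?G 0) (at 0)"
  proof (intro tendsto_mult tendsto_const)
    show "((\<lambda>h. sin h / h) \<longlongrightarrow> (1::real)) (at (0::real))"
      using DERIV_sin[of "0::real"] unfolding DERIV_def by simp
    show "(?G \<longlongrightarrow> ?G 0) (at 0)"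
      using \<open>isCont ?G 0\<close> isCont_def by blast
  qed
  then have "DERIV (theta p 1) 0 :> 2 * p powr (1/4) * ?G 0"
    unfolding DERIV_def theta_eq_prodinf by simp
  moreover have "?G 0 > 0"
    by (rule prodinf_theta_factor_pos[OF p theta_nome_powers_bounded(1)[OF p]]) simp
  ultimately show ?thesis
    using p by (simp add: DERIV_imp_deriv)
qed

section \<open>Brackets\<close>

definition br_scale :: "real \<Rightarrow> real \<Rightarrow> nat \<Rightarrow> real" where
  "br_scale p \<alpha> r = (if r = 1 then \<alpha>/2 * deriv (theta p 1) 0 else theta p r 0)"

lemma br_eq_theta_div_scale: "br p \<alpha> r x = theta p r (\<alpha>/2 * x) / br_scale p \<alpha> r"
  by (simp add: br_def br_scale_def)

lemma atLeastAtMost_1_4_cases: "r \<in> {1..4::nat} \<Longrightarrow> r = 1 \<or> r = 2 \<or> r = 3 \<or> r = 4"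
  by auto

lemma br_scale_pos:
  assumes p: "0 < p" "p < 1" and "\<alpha> > 0" and "r \<in> {1..4}"
  shows "br_scale p \<alpha> r > 0"
  using atLeastAtMost_1_4_cases[OF \<open>r \<in> {1..4}\<close>] deriv_theta1_pos[OF p] theta_pos[OF p, of 0] \<open>\<alpha> > 0\<close>
  by (auto simp: br_scale_def)

lemma perm4_2_simps:
  "perm4 2 1 = 2" "perm4 2 2 = 1" "perm4 2 3 = 4" "perm4 2 4 = 3"
  by (simp_all add: perm4_def)

lemma perm4_2_in_range: "r \<in> {1..4} \<Longrightarrow> perm4 2 r \<in> {1..4}"
  by (auto dest: atLeastAtMost_1_4_cases simp: perm4_def)

lemma theta_reflect_perm4_2: "r \<in> {1..4} \<Longrightarrow> theta p r (pi/2 - w) = theta p (perm4 2 r) w"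
  by (drule atLeastAtMost_1_4_cases) (elim disjE; simp only: perm4_2_simps theta_reflect)

lemma br_reflect:
  assumes p: "0 < p" "p < 1" and "\<alpha> > 0" and "\<alpha> * S = pi" and r: "r \<in> {1..4}"
  shows "br p \<alpha> r (S - y) = br_scale p \<alpha> (perm4 2 r) / br_scale p \<alpha> r * br p \<alpha> (perm4 2 r) y"
proof -
  have "\<alpha>/2 * (S - y) = (\<alpha> * S)/2 - \<alpha>/2 * y"
    by (simp add: right_diff_distrib)
  then have arg: "\<alpha>/2 * (S - y) = pi/2 - \<alpha>/2 * y"
    using \<open>\<alpha> * S = pi\<close> by simp
  have "br_scale p \<alpha> (perm4 2 r) \<noteq> 0"
    using br_scale_pos[OF p \<open>\<alpha> > 0\<close> perm4_2_in_range[OF r]] by simp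
  then show ?thesis
    unfolding br_eq_theta_div_scale arg theta_reflect_perm4_2[OF r] by simp
qed

lemma br_ratio_reflect:
  assumes p: "0 < p" "p < 1" and "\<alpha> > 0" and "\<alpha> * S = pi" and r: "r \<in> {1..4}"
  shows "c * (br p \<alpha> r (S - A) * br p \<alpha> r (S - B)) / (br p \<alpha> r (S - C) * br p \<alpha> r (S - D))
       = c * (br p \<alpha> (perm4 2 r) A * br p \<alpha> (perm4 2 r) B) / (br p \<alpha> (perm4 2 r) C * br p \<alpha> (perm4 2 r) D)"
proof -
  have "br_scale p \<alpha> (perm4 2 r) / br_scale p \<alpha> r \<noteq> 0"
    using br_scale_pos[OF p \<open>\<alpha> > 0\<close> r] br_scale_pos[OF p \<open>\<alpha> > 0\<close> perm4_2_in_range[OF r]] by simp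
  then show ?thesis
    unfolding br_reflect[OF assms] by (cases "br p \<alpha> (perm4 2 r) C * br p \<alpha> (perm4 2 r) D = 0") simp_all
qed

lemma br_pos:
  assumes p: "0 < p" "p < 1" and "\<alpha> > 0" and "\<alpha> * S = pi" and r: "r \<in> {1..4}"
    and "r = 1 \<Longrightarrow> 0 < x \<and> x < 2*S" and "r = 2 \<Longrightarrow> -S < x \<and> x < S"
  shows "br p \<alpha> r x > 0"
proof -
  have "theta p r (\<alpha>/2*x) > 0"
  proof -
    consider "r = 1" | "r = 2" | "r = 3" | "r = 4" using atLeastAtMost_1_4_cases[OF r] by blast
    then show ?thesis
    proof cases
      case 1
      then have "\<alpha> * x < \<alpha> * (2*S)" "0 < \<alpha>/2*x"
        using assms(6) \<open>\<alpha> > 0\<close> by simp_all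
      then have "0 < \<alpha>/2*x" "\<alpha>/2*x < pi"
        using \<open>\<alpha> * S = pi\<close> by (simp_all add: algebra_simps)
      with 1 show ?thesis using theta_pos(3)[OF p] sin_gt_zero by blast
    next
      case 2
      then have "- (pi/2) < \<alpha>/2*x" "\<alpha>/2*x < pi/2"
        using assms(7) \<open>\<alpha> > 0\<close> \<open>\<alpha> * S = pi\<close> mult_strict_left_mono[of x S \<alpha>] mult_strict_left_mono[of "-S" x \<alpha>]
        by simp_all
      with 2 show ?thesis using theta_pos(4)[OF p] cos_gt_zero_pi by blast
    qed (use theta_pos[OF p] in auto)
  qed
  then show ?thesis
    unfolding br_eq_theta_div_scale using br_scale_pos[OF p \<open>\<alpha> > 0\<close> r] by simp
qed

section \<open>The tridiagonal matrix H\<close>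

lemma prod_atLeastAtMost_1_4:
  "(\<Prod>r\<in>{1..4::nat}. f r) = f 1 * f 2 * f 3 * (f 4 :: 'a::comm_monoid_mult)"
proof -
  have "{1..4::nat} = {1,2,3,4}" by auto
  then show ?thesis by (simp add: mult.assoc)
qed

lemma sum_atLeastAtMost_1_4:
  "(\<Sum>r\<in>{1..4::nat}. f r) = f 1 + f 2 + f 3 + (f 4 :: 'a::comm_monoid_add)"
proof -
  have "{1..4::nat} = {1,2,3,4}" by auto
  then show ?thesis by (simp add: add.assoc)
qed

lemma alph_pos: "uu 1 > 0 \<Longrightarrow> uu 2 > 0 \<Longrightarrow> alph uu M > 0"
  by (simp add: alph_def)

lemma alph_mult_eq_pi: "uu 1 > 0 \<Longrightarrow> uu 2 > 0 \<Longrightarrow> alph uu M * (uu 1 + uu 2 + real M) = pi"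
  by (simp add: alph_def)

lemma
  assumes p: "0 < p" "p < 1" and hu: "uu 1 > 0" "uu 2 > 0"
    and hv: "\<bar>vv 1\<bar> < uu 1 + 1/2" "\<bar>vv 2\<bar> < uu 2 + 1/2" and k: "1 \<le> k" "k \<le> M"
  shows aa_pos: "aa p uu vv M (int k) > 0"
    and aat_pos: "aat p uu vv M (int k) > 0"
proof -
  note br_pos = br_pos[OF p alph_pos[OF hu] alph_mult_eq_pi[OF hu]]
  have "1 \<le> real k" "real k \<le> real M" using k by auto
  then show "aa p uu vv M (int k) > 0" "aat p uu vv M (int k) > 0"
    unfolding aa_def aat_def Let_def prod_atLeastAtMost_1_4 perm4_2_simps
    by (intro mult_pos_pos divide_pos_pos br_pos; use hu hv in \<open>auto simp: abs_less_iff\<close>)+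
qed

lemma alph_perm4_2: "alph (uu \<circ> perm4 2) M = alph uu M"
  by (simp add: alph_def perm4_def add.commute)

lemma aa_perm4_2: "aa p (uu \<circ> perm4 2) (vv \<circ> perm4 2) M k = aat p uu vv M k"
  unfolding aa_def aat_def Let_def alph_perm4_2 prod_atLeastAtMost_1_4 by (simp add: perm4_def)

lemma aat_perm4_2: "aat p (uu \<circ> perm4 2) (vv \<circ> perm4 2) M k = aa p uu vv M k"
  unfolding aa_def aat_def Let_def alph_perm4_2 prod_atLeastAtMost_1_4 by (simp add: perm4_def)

lemma cc_perm4_2:
  "r \<in> {1..4} \<Longrightarrow> cc p (uu \<circ> perm4 2) (vv \<circ> perm4 2) M u r = cc p uu vv M u (perm4 2 r)"
  unfolding cc_def Let_def alph_perm4_2 prod_atLeastAtMost_1_4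
  by (drule atLeastAtMost_1_4_cases) (elim disjE; simp add: perm4_def mult_ac)

text \<open>Swapping the parameters by \<pi>_2 replaces u_1 + k by u_2 + k = S - (u_1 + (M - k)), S = u_1 + u_2 + M,
  and reflecting the brackets at S permutes the four summands of b_k by \<pi>_2.\<close>
lemma bb_perm4_2:
  assumes p: "0 < p" "p < 1" and hu: "uu 1 > 0" "uu 2 > 0" and i: "i \<le> M"
  shows "bb p (uu \<circ> perm4 2) (vv \<circ> perm4 2) M u (int i) = bb p uu vv M u (int (M - i))"
proof -
  define S where "S = uu 1 + uu 2 + real M"
  define m where "m = real_of_int (int (M - i))"
  let ?\<alpha> = "alph uu M"
  have args: "uu 2 + real_of_int (int i) + 1/2 + u = S - (uu 1 + m - 1/2 - u)"
    "uu 2 + real_of_int (int i) - 1/2 - u = S - (uu 1 + m + 1/2 + u)"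
    "uu 2 + real_of_int (int i) + 1/2 = S - (uu 1 + m - 1/2)"
    "uu 2 + real_of_int (int i) - 1/2 = S - (uu 1 + m + 1/2)"
    "S - (uu 1 + m - 1/2) + u = S - (uu 1 + m - 1/2 - u)"
    "S - (uu 1 + m + 1/2) - u = S - (uu 1 + m + 1/2 + u)"
    using i by (auto simp: S_def m_def of_nat_diff)
  have u1: "(uu \<circ> perm4 2) 1 = uu 2" by (simp add: perm4_def)
  have "bb p (uu \<circ> perm4 2) (vv \<circ> perm4 2) M u (int i) =
     (\<Sum>r\<in>{1..4}. cc p uu vv M u (perm4 2 r) *
        (br p ?\<alpha> r (S - (uu 1 + m - 1/2 - u)) * br p ?\<alpha> r (S - (uu 1 + m + 1/2 + u)))
        / (br p ?\<alpha> r (S - (uu 1 + m - 1/2)) * br p ?\<alpha> r (S - (uu 1 + m + 1/2))))"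
    unfolding bb_def Let_def alph_perm4_2 u1 args
    by (intro sum.cong refl) (simp only: cc_perm4_2)
  also have "\<dots> = (\<Sum>r\<in>{1..4}. cc p uu vv M u (perm4 2 r) *
        (br p ?\<alpha> (perm4 2 r) (uu 1 + m - 1/2 - u) * br p ?\<alpha> (perm4 2 r) (uu 1 + m + 1/2 + u))
        / (br p ?\<alpha> (perm4 2 r) (uu 1 + m - 1/2) * br p ?\<alpha> (perm4 2 r) (uu 1 + m + 1/2)))"
    using alph_mult_eq_pi[OF hu, of M]
    by (intro sum.cong refl br_ratio_reflect[OF p alph_pos[OF hu]]) (simp_all add: S_def)
  also have "\<dots> = bb p uu vv M u (int (M - i))"
    unfolding bb_def Let_def sum_atLeastAtMost_1_4 perm4_2_simps m_def[symmetric]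
    by (simp add: mult.commute)
  finally show ?thesis .
qed

lemma Hent_perm4_2:
  assumes p: "0 < p" "p < 1" and hu: "uu 1 > 0" "uu 2 > 0" and i: "i \<le> M" and j: "j \<le> M"
  shows "Hent p (uu \<circ> perm4 2) (vv \<circ> perm4 2) M u i j = Hent p uu vv M u (M - i) (M - j)"
proof -
  consider "i = j" | "i = j + 1" | "j = i + 1" | "i \<noteq> j" "i \<noteq> j + 1" "j \<noteq> i + 1" by blast
  then show ?thesis
  proof cases
    case 1
    then show ?thesis using bb_perm4_2[OF p hu i] by (simp add: Hent_def)
  next
    case 2
    then have "M - j = M - i + 1" using i by simp
    with 2 i show ?thesis by (simp add: Hent_def aa_perm4_2 of_nat_diff)
  next
    case 3
    then have "M - i = M - j + 1" using j by simp
    with 3 j show ?thesis by (simp add: Hent_def aat_perm4_2 of_nat_diff)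
  qed (use i j in \<open>auto simp: Hent_def\<close>)
qed

definition offdiag_prod :: "real \<Rightarrow> (nat \<Rightarrow> real) \<Rightarrow> (nat \<Rightarrow> real) \<Rightarrow> nat \<Rightarrow> nat \<Rightarrow> real" where
  "offdiag_prod p uu vv M l = aa p uu vv M (int l) * aat p uu vv M (int M + 1 - int l)"

lemma offdiag_prod_pos:
  assumes "0 < p" "p < 1" "uu 1 > 0" "uu 2 > 0" "\<bar>vv 1\<bar> < uu 1 + 1/2" "\<bar>vv 2\<bar> < uu 2 + 1/2"
    and "1 \<le> l" "l \<le> M"
  shows "offdiag_prod p uu vv M l > 0"
proof -
  have "int M + 1 - int l = int (M + 1 - l)" using \<open>l \<le> M\<close> by simp
  moreover have "aat p uu vv M (int (M + 1 - l)) > 0"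
    using aat_pos[OF assms(1-6), of "M + 1 - l" M] assms(7,8) by simp
  ultimately show ?thesis
    unfolding offdiag_prod_def using aa_pos[OF assms] by simp
qed

lemma pp_eq_continuant:
  "pp p uu vv M u k E = continuant (\<lambda>i. E - bb p uu vv M u (int i)) (offdiag_prod p uu vv M) k"
proof -
  let ?T = "\<lambda>i j. (if i = j then E else 0) - Hent p uu vv M u i j"
  have "pp p uu vv M u k E = continuant (\<lambda>i. ?T i i) (\<lambda>i. ?T i (i - 1) * ?T (i - 1) i) k"
    unfolding pp_def by (rule det_tridiagonal) (auto simp: Hent_def)
  also have "\<dots> = continuant (\<lambda>i. E - bb p uu vv M u (int i)) (offdiag_prod p uu vv M) k"
  proof (rule continuant_cong)
    fix i assume "0 < i" "i < k"
    then have index: "int M - (int i - 1) = int M + 1 - int i" and "i - 1 \<noteq> Suc i" "i - 1 \<noteq> i"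
      by auto
    with \<open>0 < i\<close> show "?T i (i - 1) * ?T (i - 1) i = offdiag_prod p uu vv M i"
      by (simp add: Hent_def offdiag_prod_def index of_nat_diff)
  qed (simp add: Hent_def)
  finally show ?thesis .
qed

text \<open>\<pi>_2 conjugates H by the reversal k \<mapsto> M - k, so the p_M of the permuted parameters is the
  continuant of H with its first row and column removed.\<close>
lemma pp_perm4_2_eq_continuant:
  assumes p: "0 < p" "p < 1" and hu: "uu 1 > 0" "uu 2 > 0"
  shows "pp p (uu \<circ> perm4 2) (vv \<circ> perm4 2) M u M E
     = continuant (\<lambda>i. E - bb p uu vv M u (int (Suc i))) (\<lambda>i. offdiag_prod p uu vv M (Suc i)) M"
proof -
  let ?H = "Hent p (uu \<circ> perm4 2) (vv \<circ> perm4 2) M u"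
  let ?T = "\<lambda>i j. (if i = j then E else 0) - ?H i j"
  have "pp p (uu \<circ> perm4 2) (vv \<circ> perm4 2) M u M E = continuant (\<lambda>i. ?T i i) (\<lambda>i. ?T i (i - 1) * ?T (i - 1) i) M"
    unfolding pp_def by (rule det_tridiagonal) (auto simp: Hent_def)
  also have "\<dots> = continuant (\<lambda>i. E - bb p uu vv M u (int (Suc (M - 1 - i))))
      (\<lambda>i. offdiag_prod p uu vv M (Suc (M - i))) M"
  proof (rule continuant_cong)
    fix i assume "i < M"
    then show "?T i i = E - bb p uu vv M u (int (Suc (M - 1 - i)))"
      using Hent_perm4_2[OF p hu, of i M i vv u] by (simp add: Hent_def Suc_diff_Suc)
  next
    fix i assume i: "0 < i" "i < M"
    have "?H i (i - 1) = Hent p uu vv M u (M - i) (Suc (M - i))"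
      using i Hent_perm4_2[OF p hu, of i M "i - 1" vv u] by (simp add: Suc_diff_Suc Suc_diff_le)
    moreover have "?H (i - 1) i = Hent p uu vv M u (Suc (M - i)) (M - i)"
      using i Hent_perm4_2[OF p hu, of "i - 1" M i vv u] by (simp add: Suc_diff_Suc Suc_diff_le)
    moreover have "int M - int (M - i) = int M + 1 - int (Suc (M - i))" using i by simp
    ultimately show "?T i (i - 1) * ?T (i - 1) i = offdiag_prod p uu vv M (Suc (M - i))"
      using i by (auto simp: Hent_def offdiag_prod_def mult.commute)
  qed
  also have "\<dots> = continuant (\<lambda>i. E - bb p uu vv M u (int (Suc i))) (\<lambda>i. offdiag_prod p uu vv M (Suc i)) M"
    by (rule continuant_reverse)
  finally show ?thesis .
qed

lemma eigenvalue_Hmat_imp_pp_eq_0: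
  assumes "eigenvalue (Hmat p uu vv M u) E"
  shows "pp p uu vv M u (Suc M) E = 0"
proof -
  let ?A = "Hmat p uu vv M u"
  have A: "?A \<in> carrier_mat (Suc M) (Suc M)" by (simp add: Hmat_def)
  have "mat (Suc M) (Suc M) (\<lambda>(i,j). (if i = j then E else 0) - Hent p uu vv M u i j)
        = (-1) \<cdot>\<^sub>m char_matrix ?A E"
    by (rule eq_matI) (auto simp: char_matrix_def Hmat_def)
  moreover have "det (char_matrix ?A E) = 0"
    using assms eigenvalue_det[OF A] by simp
  ultimately show ?thesis
    unfolding pp_def using A by (simp add: char_matrix_def)
qed

lemma prod_lessThan_shift:
  "(\<Prod>j<k. f (int M - int j)) = (\<Prod>l\<in>{1..k}. f (int M + 1 - int l))"
  by (induction k) (simp_all add: atLeastAtMostSuc_conv mult.commute)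

lemma sum_ff_ff_Delta_eq:
  assumes "0 < p" "p < 1" "uu 1 > 0" "uu 2 > 0" "\<bar>vv 1\<bar> < uu 1 + 1/2" "\<bar>vv 2\<bar> < uu 2 + 1/2"
  shows "(\<Sum>k\<in>{0..M}. ff p uu vv M u k x * ff p uu vv M u k y * Delta p uu vv M k)
    = (\<Sum>k\<le>M. continuant (\<lambda>i. x - bb p uu vv M u (int i)) (offdiag_prod p uu vv M) k
        * continuant (\<lambda>i. y - bb p uu vv M u (int i)) (offdiag_prod p uu vv M) k
        / (\<Prod>l\<in>{1..k}. offdiag_prod p uu vv M l))"
  unfolding atLeast0AtMost
proof (intro sum.cong refl)
  fix k assume "k \<in> {..M}"
  let ?X = "\<Prod>l\<in>{1..k}. aat p uu vv M (int M + 1 - int l)"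
  let ?Y = "\<Prod>l\<in>{1..k}. aa p uu vv M (int l)"
  have "?X > 0"
  proof (rule prod_pos)
    fix l assume l: "l \<in> {1..k}"
    then have "int M + 1 - int l = int (M + 1 - l)" using \<open>k \<in> {..M}\<close> by auto
    moreover have "aat p uu vv M (int (M + 1 - l)) > 0"
      using aat_pos[OF assms, of "M + 1 - l" M] l \<open>k \<in> {..M}\<close> by auto
    ultimately show "aat p uu vv M (int M + 1 - int l) > 0" by simp
  qed
  moreover have "(\<Prod>j<k. inverse (aat p uu vv M (int M - int j))) = inverse ?X"
    using prod_lessThan_shift[of "\<lambda>t. inverse (aat p uu vv M t)" M k]
      prod_inversef[of "\<lambda>l. aat p uu vv M (int M + 1 - int l)" "{1..k}"]
    by (simp add: comp_def)
  moreover have "Delta p uu vv M k = ?X / ?Y"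
    unfolding Delta_def by (rule prod_dividef)
  moreover have "(\<Prod>l\<in>{1..k}. offdiag_prod p uu vv M l) = ?Y * ?X"
    unfolding offdiag_prod_def by (rule prod.distrib)
  ultimately show "ff p uu vv M u k x * ff p uu vv M u k y * Delta p uu vv M k
    = continuant (\<lambda>i. x - bb p uu vv M u (int i)) (offdiag_prod p uu vv M) k
        * continuant (\<lambda>i. y - bb p uu vv M u (int i)) (offdiag_prod p uu vv M) k
        / (\<Prod>l\<in>{1..k}. offdiag_prod p uu vv M l)"
    unfolding ff_def pp_eq_continuant by (simp add: field_simps)
qed

lemma prod_br_ratio_eq_inverse_prod_aa:
  "(\<Prod>k\<in>{1..M}. \<Prod>r\<in>{1..4}.
      br p (alph uu M) r (uu 1 + real k) * br p (alph uu M) r (uu 1 - 1/2 + real k)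
      / (br p (alph uu M) r (uu 1 - uu r + real k) * br p (alph uu M) r (uu 1 - vv r - 1/2 + real k)))
   = inverse (\<Prod>k\<in>{1..M}. aa p uu vv M (int k))"
  unfolding prod_inversef[symmetric] aa_def Let_def
  by (intro prod.cong refl) (simp add: prod_inversef[symmetric])

theorem mainTheorem7:
  fixes p u :: real and uu vv :: "nat \<Rightarrow> real" and M :: nat and E :: "nat \<Rightarrow> real"
  assumes hp: "0 < p" "p < 1"
    and hu: "uu 1 > 0" "uu 2 > 0"
    and hv: "\<bar>vv 1\<bar> < uu 1 + 1/2" "\<bar>vv 2\<bar> < uu 2 + 1/2"
    and hu0: "\<forall>n::int. u \<noteq> 2 * pi / alph uu M * of_int n"
    and hu1: "\<forall>n::int. u + 1 \<noteq> 2 * pi / alph uu M * of_int n"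
    and hE_eig: "\<forall>i\<le>M. eigenvalue (Hmat p uu vv M u) (E i)"
    and hE_dec: "\<forall>i j. i < j \<longrightarrow> j \<le> M \<longrightarrow> E j < E i"
    and hi: "i \<le> M" and hj: "j \<le> M"
  shows
    "(let A = (\<Prod>l\<in>{1..M}. aa p uu vv M (int l));
          \<epsilon> = pp p (uu \<circ> perm4 2) (vv \<circ> perm4 2) M u M (E j) / A;
          P = (\<Prod>l\<in>{0..M} - {j}. \<bar>E j - E l\<bar>);
          N = 1 / (\<bar>\<epsilon>\<bar> * A) * P
      in (\<Sum>k\<in>{0..M}. ff p uu vv M u k (E i) * ff p uu vv M u k (E j) * Delta p uu vv M k)
           = (if i = j then N else 0)
         \<and> N = 1 / \<bar>\<epsilon>\<bar> *
              (\<Prod>k\<in>{1..M}. \<Prod>r\<in>{1..4}.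
                 br p (alph uu M) r (uu 1 + real k) * br p (alph uu M) r (uu 1 - 1/2 + real k)
                 / (br p (alph uu M) r (uu 1 - uu r + real k)
                    * br p (alph uu M) r (uu 1 - vv r - 1/2 + real k))) * P)"
proof -
  (* hu0 and hu1 only make the c_r well defined: the argument works for any real diagonal b_k. *)
  define b where "b i = bb p uu vv M u (int i)" for i
  define g where "g = offdiag_prod p uu vv M"
  define A where "A = (\<Prod>l\<in>{1..M}. aa p uu vv M (int l))"
  define Q where "Q = pp p (uu \<circ> perm4 2) (vv \<circ> perm4 2) M u M (E j)"
  define P where "P = (\<Prod>l\<in>{0..M} - {j}. \<bar>E j - E l\<bar>)"
  have "A > 0"
    unfolding A_def by (intro prod_pos aa_pos[OF hp hu hv]) auto
  have roots: "continuant (\<lambda>i. E l - b i) g (Suc M) = 0" if "l \<le> M" for l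
    using eigenvalue_Hmat_imp_pp_eq_0 hE_eig that by (simp add: pp_eq_continuant b_def g_def)
  have "(\<Sum>k\<in>{0..M}. ff p uu vv M u k (E i) * ff p uu vv M u k (E j) * Delta p uu vv M k)
      = (\<Sum>k\<le>M. continuant (\<lambda>l. E i - b l) g k * continuant (\<lambda>l. E j - b l) g k / (\<Prod>l\<in>{1..k}. g l))"
    unfolding sum_ff_ff_Delta_eq[OF hp hu hv] b_def g_def ..
  also have "\<dots> = (if i = j then P / \<bar>Q\<bar> else 0)"
    unfolding P_def Q_def abs_prod[symmetric] pp_perm4_2_eq_continuant[OF hp hu] b_def g_def
    using hE_dec roots offdiag_prod_pos[OF hp hu hv] hi hj
    by (intro continuant_orthogonality) (simp_all add: b_def g_def)
  finally have "(\<Sum>k\<in>{0..M}. ff p uu vv M u k (E i) * ff p uu vv M u k (E j) * Delta p uu vv M k)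
      = (if i = j then P / \<bar>Q\<bar> else 0)" .
  moreover have "1 / (\<bar>Q / A\<bar> * A) * P = P / \<bar>Q\<bar>"
    using \<open>A > 0\<close> by simp
  moreover have "1 / (\<bar>Q / A\<bar> * A) = 1 / \<bar>Q / A\<bar> * inverse A"
    by (simp add: divide_inverse)
  ultimately show ?thesis
    unfolding Let_def prod_br_ratio_eq_inverse_prod_aa
    by (simp only: A_def[symmetric] Q_def[symmetric] P_def[symmetric])
qed

end
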